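(* Fix a compact cube $K\subseteq\mathbb R^d$, $0<T<\infty$ and an initial state $\sigma\in\Sigma$. Then there is an almost surely finite random variable $M$ such that almost surely $\sigma(x,t)=\sigma^M(x,t)$ for all $(x,t)\in K\times[0,T]$, where for $m>0$, $$\sigma^m(x,t)=\sup_{y\le x,\ |y|_\infty\le m}\{\sigma(y)+\mathbf H((y,0),(x,t))\}.$$
   Context: Order: for $x,y\in\mathbb R^d$, $x\le y$ iff $x_i\le y_i$ for all $i$; $\mathbf 1=(1,\dots,1)$; $|x|_\infty=\max_i|x_i|$; $d\ge2$. $\mathbb Z^*=\mathbb Z\cup\{\pm\infty\}$. The state space $\Sigma$ is the set of functions $\sigma:\mathbb R^d\to\mathbb Z^*$ such that (i) $x\le y$ implies $\sigma(x)\le\sigma(y)$; (ii) for every cube $[-q\mathbf 1,q\mathbf 1]$ there are finite partitions $-q=s_i^0<\dots<s_i^{m_i}=q$ of each coordinate axis such that $\sigma$ is constant on each rectangle $\prod_i[s_i^{k_i},s_i^{k_i+1})$; (iii) for every $b\in\mathbb R^d$, $\lim_{M\to\infty}\sup\{|y|_\infty^{-d/(d+1)}\sigma(y):y\le b,|y|_\infty\ge M\}=-\infty$. A rate-one Poisson point process on $\mathbb R^d\times(0,\infty)$ is given; $\mathbf H((y,0),(x,t))$ is the maximal number of Poisson points on a strictly increasing chain (coordinatewise order in $\mathbb R^{d+1}$) in $\{(\eta,s):y<\eta\le x,0<s\le t\}$ (with $\mathbf H=0$ for $t=0$). The process is $\sigma(x,t)=\sup_{y\le x}\{\sigma(y)+\mathbf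 H((y,0),(x,t))\}$, $\sigma(x,0)=\sigma(x)$. *)

theory Defs
  imports "HOL-Probability.Probability"
begin

type_synonym 'd pt = "real^'d"

definition vle :: "real^'d \<Rightarrow> real^'d \<Rightarrow> bool" where
  "vle x y \<longleftrightarrow> (\<forall>i. x$i \<le> y$i)"

definition vlt :: "real^'d \<Rightarrow> real^'d \<Rightarrow> bool" where
  "vlt x y \<longleftrightarrow> (\<forall>i. x$i < y$i)"

definition supnorm :: "real^'d \<Rightarrow> real" where
  "supnorm x = Max (range (\<lambda>i. \<bar>x$i\<bar>))"

definition zstar :: "ereal set" where
  "zstar = {ereal (real_of_int k) | k. True} \<union> {\<infinity>, -\<infinity>}"

definition StateSpace :: "(real^'d \<Rightarrow> ereal) set" where
  "StateSpace = {\<sigma>.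
     (\<forall>x. \<sigma> x \<in> zstar) \<and>
     (\<forall>x y. vle x y \<longrightarrow> \<sigma> x \<le> \<sigma> y) \<and>
     (\<forall>q>0. \<exists>S :: 'd \<Rightarrow> real set.
        (\<forall>i. finite (S i) \<and> -q \<in> S i \<and> q \<in> S i \<and> S i \<subseteq> {-q..q}) \<and>
        (\<forall>x y. (\<forall>i. x$i \<in> {-q..<q} \<and> y$i \<in> {-q..<q}) \<and>
               (\<forall>i. \<forall>s\<in>S i. (s \<le> x$i \<longleftrightarrow> s \<le> y$i))
               \<longrightarrow> \<sigma> x = \<sigma> y)) \<and>
     (\<forall>b. ((\<lambda>M. Sup {ereal (supnorm y powr (- real CARD('d) / (real CARD('d) + 1))) * \<sigma> y
                     | y. vle y b \<and> supnorm y \<ge> M})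
            \<longlongrightarrow> -\<infinity>) at_top)}"

definition poisson_pp ::
  "'a measure \<Rightarrow> ('a \<Rightarrow> ((real^'d) \<times> real) set) \<Rightarrow> bool" where
  "poisson_pp M P \<longleftrightarrow>
     prob_space M \<and>
     (\<forall>\<omega>\<in>space M. P \<omega> \<subseteq> UNIV \<times> {0<..} \<and>
        (\<forall>B. bounded B \<longrightarrow> finite (P \<omega> \<inter> B))) \<and>
     (\<forall>B. B \<in> sets borel \<and> bounded B \<and> B \<subseteq> UNIV \<times> {0<..} \<longrightarrow>
        (\<lambda>\<omega>. card (P \<omega> \<inter> B)) \<in> measurable M (count_space UNIV) \<and>
        (\<forall>k. measure M {\<omega>\<in>space M. card (P \<omega> \<inter> B) = k}
              = (measure lborel B) ^ k / fact k * exp (- measure lborel B))) \<and>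
     (\<forall>(I :: nat set) Bs. finite I \<and> disjoint_family_on Bs I \<and>
        (\<forall>i\<in>I. Bs i \<in> sets borel \<and> bounded (Bs i) \<and> Bs i \<subseteq> UNIV \<times> {0<..}) \<longrightarrow>
        prob_space.indep_vars M (\<lambda>_. count_space UNIV)
          (\<lambda>i \<omega>. card (P \<omega> \<inter> Bs i)) I)"

definition strict_chain :: "((real^'d) \<times> real) set \<Rightarrow> bool" where
  "strict_chain C \<longleftrightarrow> (\<forall>p\<in>C. \<forall>q\<in>C. p \<noteq> q \<longrightarrow>
      (vlt (fst p) (fst q) \<and> snd p < snd q) \<or> (vlt (fst q) (fst p) \<and> snd q < snd p))"

text \<open>H((y,0),(x,t)) for the point configuration Pw.\<close>
definition Hlpp :: "((real^'d) \<times> real) set \<Rightarrow> real^'d \<Rightarrow> real^'d \<Rightarrow> real \<Rightarrow> ereal" where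
  "Hlpp Pw y x t = Sup {ereal (real (card C)) | C. finite C \<and> strict_chain C \<and>
      C \<subseteq> Pw \<inter> {(\<eta>, s). vlt y \<eta> \<and> vle \<eta> x \<and> 0 < s \<and> s \<le> t}}"

definition sigma_proc ::
  "(real^'d \<Rightarrow> ereal) \<Rightarrow> ((real^'d) \<times> real) set \<Rightarrow> real^'d \<Rightarrow> real \<Rightarrow> ereal" where
  "sigma_proc \<sigma> Pw x t = Sup {\<sigma> y + Hlpp Pw y x t | y. vle y x}"

definition sigma_trunc ::
  "real \<Rightarrow> (real^'d \<Rightarrow> ereal) \<Rightarrow> ((real^'d) \<times> real) set \<Rightarrow> real^'d \<Rightarrow> real \<Rightarrow> ereal" where
  "sigma_trunc m \<sigma> Pw x t = Sup {\<sigma> y + Hlpp Pw y x t | y. vle y x \<and> supnorm y \<le> m}"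

end

theory Submission
  imports Defs "HOL-Real_Asymp.Real_Asymp"
begin

(* A far-away initial point y cannot beat y = x in the supremum defining sigma (x, t) on the
   cube K = [c, b]. By the growth condition (iii), for every A we have
   sigma y <= -A |y|^(d/(d+1)) once |y| is large, whereas almost surely the longest chain from
   (b - (n, ..., n), 0) to (b, T) has length at most C n^(d/(d+1)) + 1 for all large n; together
   these bound the contribution of every y beyond some radius by sigma x. The chain bound is
   Hammersley's argument plus Borel-Cantelli: a chain of length k in a box of side n and height T
   passes through a coordinatewise monotone path of k cells of the grid with k^(d+1) cells; there
   are at most 4^(k(d+1)) such paths, and the k cells of a path, of total volume lambda, contain
   k Poisson points with probability at most lambda^k/k!. This is at most 2^(-k) once
   k >= C n^(d/(d+1)), and the random radius is built from the (measurable) last n at which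
   such a long chain occurs. *)

section \<open>Space-time boxes and longest chains\<close>

lemma abs_component_le_supnorm: "\<bar>x $ i\<bar> \<le> supnorm x"
  unfolding supnorm_def by (rule Max_ge) auto

lemma supnorm_nonneg: "0 \<le> supnorm x"
  using abs_ge_zero abs_component_le_supnorm by (rule order_trans)

lemma supnorm_le: "(\<And>i. \<bar>x $ i\<bar> \<le> K) \<Longrightarrow> supnorm x \<le> K"
  unfolding supnorm_def by (subst Max_le_iff) auto

lemma supnorm_le_of_mem_cbox: "x \<in> cbox a b \<Longrightarrow> supnorm x \<le> supnorm a + supnorm b"
proof (rule supnorm_le)
  fix i assume "x \<in> cbox a b"
  then have "a $ i \<le> x $ i" "x $ i \<le> b $ i" by (simp_all add: mem_box_cart)
  then show "\<bar>x $ i\<bar> \<le> supnorm a + supnorm b"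
    using abs_component_le_supnorm[of a i] abs_component_le_supnorm[of b i] by linarith
qed

definition stbox :: "real^'d \<Rightarrow> real \<Rightarrow> real^'d \<Rightarrow> real \<Rightarrow> ((real^'d) \<times> real) set" where
  "stbox y s x t = {(\<eta>, u). vlt y \<eta> \<and> vle \<eta> x \<and> s < u \<and> u \<le> t}"

lemma stbox_mono:
  "vle y' y \<Longrightarrow> s' \<le> s \<Longrightarrow> vle x x' \<Longrightarrow> t \<le> t' \<Longrightarrow> stbox y s x t \<subseteq> stbox y' s' x' t'"
  unfolding stbox_def vle_def vlt_def by (auto intro: order_le_less_trans order_trans)

lemma stbox_subset_cbox: "stbox y s x t \<subseteq> cbox (y, s) (x, t)"
  unfolding stbox_def vle_def vlt_def cbox_Pair_eq by (auto simp: mem_box_cart less_imp_le)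

lemma bounded_stbox: "bounded (stbox y s x t)"
  using bounded_cbox stbox_subset_cbox by (rule bounded_subset)

lemma stbox_borel: "stbox y s x t \<in> sets borel"
proof -
  have [measurable]: "(\<lambda>p::(real^'d) \<times> real. fst p $ i) \<in> borel_measurable borel" for i
    by (intro borel_measurable_continuous_onI continuous_intros)
  have [measurable]: "(\<lambda>p::(real^'d) \<times> real. snd p) \<in> borel_measurable borel"
    by (intro borel_measurable_continuous_onI continuous_intros)
  have "stbox y s x t =
      {p \<in> space borel. (\<forall>i. y $ i < fst p $ i \<and> fst p $ i \<le> x $ i) \<and> s < snd p \<and> snd p \<le> t}"
    unfolding stbox_def vle_def vlt_def by auto
  also have "\<dots> \<in> sets borel" by measurable
  finally show ?thesis .
qed

lemma stbox_subset_positive_time: "0 \<le> s \<Longrightarrow> stbox y s x t \<subseteq> UNIV \<times> {0<..}"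
  unfolding stbox_def by auto

lemma measure_stbox_le:
  assumes "vle y x" "s \<le> t"
  shows "measure lborel (stbox y s x t) \<le> (\<Prod>i\<in>UNIV. x $ i - y $ i) * (t - s)"
proof -
  have "y \<in> cbox y x" using assms(1) by (simp add: mem_box_cart vle_def)
  then have "measure lborel (cbox y x) = (\<Prod>i\<in>UNIV. x $ i - y $ i)"
    by (intro content_cbox_cart) blast
  moreover have "measure lborel (cbox s t) = t - s"
    using assms(2) by (simp add: cbox_interval)
  moreover have "measure lborel (stbox y s x t) \<le> measure lborel (cbox (y, s) (x, t))"
    by (intro measure_mono_fmeasurable stbox_subset_cbox) (auto simp: stbox_borel)
  ultimately show ?thesis by (simp add: content_Pair)
qed

lemma Hlpp_eq_Sup_chains:
  "Hlpp Pw y x t =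
    Sup ((\<lambda>C. ereal (card C)) ` {C. finite C \<and> strict_chain C \<and> C \<subseteq> Pw \<inter> stbox y 0 x t})"
  unfolding Hlpp_def stbox_def by (rule arg_cong[where f = Sup]) auto

lemma Hlpp_mono: "vle y' y \<Longrightarrow> vle x x' \<Longrightarrow> t \<le> t' \<Longrightarrow> Hlpp Pw y x t \<le> Hlpp Pw y' x' t'"
  unfolding Hlpp_eq_Sup_chains using stbox_mono[of y' y 0 0 x x' t t']
  by (intro Sup_subset_mono) blast

lemma Hlpp_nonneg: "0 \<le> Hlpp Pw y x t"
proof -
  have "ereal (card {}) \<le> Hlpp Pw y x t"
    unfolding Hlpp_eq_Sup_chains
    by (rule Sup_upper, rule image_eqI[of _ _ "{}"]) (auto simp: strict_chain_def)
  then show ?thesis by (simp add: zero_ereal_def)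
qed

lemma Hlpp_attained:
  assumes "finite (Pw \<inter> stbox y 0 x t)"
  obtains C where "finite C" "strict_chain C" "C \<subseteq> Pw \<inter> stbox y 0 x t"
    "Hlpp Pw y x t = ereal (card C)"
proof -
  let ?chains = "{C. finite C \<and> strict_chain C \<and> C \<subseteq> Pw \<inter> stbox y 0 x t}"
  have "finite ?chains" using assms by (auto intro: finite_subset[of _ "Pow (Pw \<inter> stbox y 0 x t)"])
  moreover have "{} \<in> ?chains" by (auto simp: strict_chain_def)
  ultimately have "Hlpp Pw y x t \<in> (\<lambda>C. ereal (card C)) ` ?chains"
    unfolding Hlpp_eq_Sup_chains by (subst cSup_eq_Max) (auto intro!: Max_in)
  then show ?thesis using that by blast
qed

section \<open>The state space\<close>

lemma StateSpace_mono:
  assumes "\<sigma> \<in> StateSpace" "vle x y"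
  shows "\<sigma> x \<le> \<sigma> y"
  using assms unfolding StateSpace_def mem_Collect_eq by (elim conjE) blast

lemma StateSpace_locally_constant:
  fixes \<sigma> :: "real^'d \<Rightarrow> ereal"
  assumes "\<sigma> \<in> StateSpace" "0 < q"
  obtains S :: "'d \<Rightarrow> real set" where "\<And>i. finite (S i)"
    "\<And>x y. \<forall>i. x $ i \<in> {-q..<q} \<and> y $ i \<in> {-q..<q} \<Longrightarrow>
       \<forall>i. \<forall>s\<in>S i. s \<le> x $ i \<longleftrightarrow> s \<le> y $ i \<Longrightarrow> \<sigma> x = \<sigma> y"
proof -
  have "\<forall>q>0. \<exists>S :: 'd \<Rightarrow> real set.
        (\<forall>i. finite (S i) \<and> -q \<in> S i \<and> q \<in> S i \<and> S i \<subseteq> {-q..q}) \<and>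
        (\<forall>x y. (\<forall>i. x $ i \<in> {-q..<q} \<and> y $ i \<in> {-q..<q}) \<and>
               (\<forall>i. \<forall>s\<in>S i. s \<le> x $ i \<longleftrightarrow> s \<le> y $ i) \<longrightarrow> \<sigma> x = \<sigma> y)"
    using assms(1) unfolding StateSpace_def mem_Collect_eq by (elim conjE)
  then obtain S :: "'d \<Rightarrow> real set" where
    S: "\<forall>i. finite (S i) \<and> -q \<in> S i \<and> q \<in> S i \<and> S i \<subseteq> {-q..q}" and
    const: "\<forall>x y. (\<forall>i. x $ i \<in> {-q..<q} \<and> y $ i \<in> {-q..<q}) \<and>
      (\<forall>i. \<forall>s\<in>S i. s \<le> x $ i \<longleftrightarrow> s \<le> y $ i) \<longrightarrow> \<sigma> x = \<sigma> y"
    using assms(2) by (elim allE[of _ q] impE exE conjE)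
  show ?thesis
  proof (rule that)
    show "finite (S i)" for i using S by simp
    show "\<sigma> x = \<sigma> y" if "\<forall>i. x $ i \<in> {-q..<q} \<and> y $ i \<in> {-q..<q}"
      "\<forall>i. \<forall>s\<in>S i. s \<le> x $ i \<longleftrightarrow> s \<le> y $ i" for x y
      using that by (intro const[rule_format] conjI)
  qed
qed

lemma StateSpace_decay:
  fixes \<sigma> :: "real^'d \<Rightarrow> ereal"
  assumes "\<sigma> \<in> StateSpace"
  shows "((\<lambda>M. Sup {ereal (supnorm y powr (- real CARD('d) / (real CARD('d) + 1))) * \<sigma> y
                     | y. vle y b \<and> supnorm y \<ge> M}) \<longlongrightarrow> -\<infinity>) at_top"
  using assms unfolding StateSpace_def mem_Collect_eq by (elim conjE allE[of _ b])

lemma finite_image_if_factors_through: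
  assumes "finite (f ` S)" "\<And>x y. x \<in> S \<Longrightarrow> y \<in> S \<Longrightarrow> f x = f y \<Longrightarrow> g x = g y"
  shows "finite (g ` S)"
proof -
  have "g x = g (inv_into S f (f x))" if "x \<in> S" for x
  proof (rule assms(2))
    show "inv_into S f (f x) \<in> S" using that by (intro inv_into_into imageI)
    show "f x = f (inv_into S f (f x))" using that by (intro f_inv_into_f[symmetric] imageI)
  qed fact
  then have "g ` S = (\<lambda>v. g (inv_into S f v)) ` f ` S"
    unfolding image_image by (rule image_cong[OF refl])
  then show ?thesis using assms(1) by simp
qed

lemma StateSpace_finite_image:
  fixes \<sigma> :: "real^'d \<Rightarrow> ereal"
  assumes \<sigma>: "\<sigma> \<in> StateSpace" and K: "bounded K"
  shows "finite (\<sigma> ` K)"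
proof -
  obtain B where "0 < B" and B: "\<And>x. x \<in> K \<Longrightarrow> norm x \<le> B"
    using K unfolding bounded_pos by blast
  define q where "q = B + 1"
  have "0 < q" using \<open>0 < B\<close> by (simp add: q_def)
  have box: "\<forall>i. x $ i \<in> {-q..<q}" if "x \<in> K" for x
  proof
    fix i
    have "\<bar>x $ i\<bar> \<le> B" using component_le_norm_cart[of x i] B[OF that] by linarith
    then show "x $ i \<in> {-q..<q}" by (simp add: q_def abs_le_iff)
  qed
  obtain S :: "'d \<Rightarrow> real set" where S: "\<And>i. finite (S i)"
    and const: "\<And>x y. \<forall>i. x $ i \<in> {-q..<q} \<and> y $ i \<in> {-q..<q} \<Longrightarrow>
       \<forall>i. \<forall>s\<in>S i. s \<le> x $ i \<longleftrightarrow> s \<le> y $ i \<Longrightarrow> \<sigma> x = \<sigma> y"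
    using StateSpace_locally_constant[OF \<sigma> \<open>0 < q\<close>] by blast
  define pattern where "pattern x = (\<lambda>i. {s \<in> S i. s \<le> x $ i})" for x :: "real^'d"
  have "pattern ` K \<subseteq> (\<Pi>\<^sub>E i\<in>UNIV. Pow (S i))" by (auto simp: pattern_def)
  moreover have "finite (\<Pi>\<^sub>E i\<in>UNIV. Pow (S i))" using S by (intro finite_PiE) auto
  ultimately have "finite (pattern ` K)" by (rule finite_subset)
  moreover have "\<sigma> x = \<sigma> y" if "x \<in> K" "y \<in> K" "pattern x = pattern y" for x y
  proof (rule const)
    show "\<forall>i. x $ i \<in> {-q..<q} \<and> y $ i \<in> {-q..<q}" using box that(1,2) by simp
    show "\<forall>i. \<forall>s\<in>S i. s \<le> x $ i \<longleftrightarrow> s \<le> y $ i"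
    proof (intro allI ballI)
      fix i s assume "s \<in> S i"
      have "pattern x i = pattern y i" using that(3) by simp
      then show "s \<le> x $ i \<longleftrightarrow> s \<le> y $ i" using \<open>s \<in> S i\<close> unfolding pattern_def by blast
    qed
  qed
  ultimately show ?thesis by (rule finite_image_if_factors_through)
qed

lemma StateSpace_growth:
  fixes \<sigma> :: "real^'d \<Rightarrow> ereal"
  defines "a \<equiv> real CARD('d) / (real CARD('d) + 1)"
  assumes "\<sigma> \<in> StateSpace"
  obtains M where "1 \<le> M" "\<And>y. vle y b \<Longrightarrow> M \<le> supnorm y \<Longrightarrow> \<sigma> y < ereal (- A * supnorm y powr a)"
proof -
  let ?S = "\<lambda>M. {ereal (supnorm y powr (- a)) * \<sigma> y | y. vle y b \<and> M \<le> supnorm y}"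
  have "\<forall>\<^sub>F M in at_top. Sup (?S M) < ereal (- A)"
    using StateSpace_decay[OF assms(2), of b]
    unfolding tendsto_MInfty a_def minus_divide_left by simp
  then obtain M0 where M0: "\<And>M. M0 \<le> M \<Longrightarrow> Sup (?S M) < ereal (- A)"
    unfolding eventually_at_top_linorder by blast
  show ?thesis
  proof (rule that[of "max M0 1"])
    fix y assume y: "vle y b" "max M0 1 \<le> supnorm y"
    define r where "r = supnorm y"
    have "0 < r" using y(2) r_def by simp
    have "ereal (r powr (- a)) * \<sigma> y \<le> Sup (?S r)"
      unfolding r_def by (rule Sup_upper) (use y(1) in blast)
    also have "\<dots> < ereal (- A)" using M0 y(2) r_def by simp
    finally have "ereal (r powr (- a)) * \<sigma> y < ereal (- A)" .
    then have "ereal (r powr a) * (ereal (r powr (- a)) * \<sigma> y) < ereal (r powr a) * ereal (- A)"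
      using \<open>0 < r\<close> by (intro ereal_mult_strict_left_mono) simp_all
    moreover have "ereal (r powr a) * (ereal (r powr (- a)) * \<sigma> y) = \<sigma> y"
      using \<open>0 < r\<close> by (simp add: mult.assoc[symmetric] powr_add[symmetric])
    ultimately show "\<sigma> y < ereal (- A * supnorm y powr a)" by (simp add: r_def mult.commute)
  qed simp
qed

lemma StateSpace_far_below:
  fixes \<sigma> :: "real^'d \<Rightarrow> ereal"
  defines "a \<equiv> real CARD('d) / (real CARD('d) + 1)"
  assumes \<sigma>: "\<sigma> \<in> StateSpace" and K: "bounded K" "\<And>x. x \<in> K \<Longrightarrow> vle x b"
  obtains R where
    "\<And>x y. x \<in> K \<Longrightarrow> vle y x \<Longrightarrow> R \<le> supnorm y \<Longrightarrow> \<sigma> y + ereal (C * supnorm y powr a + 1) \<le> \<sigma> x"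
proof -
  have "bdd_below (real_of_ereal ` \<sigma> ` K)"
    using StateSpace_finite_image[OF \<sigma> K(1)] by (intro bdd_below_finite) simp
  then obtain m where m: "\<And>x. x \<in> K \<Longrightarrow> m \<le> real_of_ereal (\<sigma> x)"
    unfolding bdd_below_def by blast
  obtain M where "1 \<le> M"
    and M: "\<And>y. vle y b \<Longrightarrow> M \<le> supnorm y \<Longrightarrow> \<sigma> y < ereal (- (C + \<bar>m\<bar> + 1) * supnorm y powr a)"
    using StateSpace_growth[OF \<sigma>, of b "C + \<bar>m\<bar> + 1", folded a_def] by blast
  show ?thesis
  proof (rule that[of M])
    fix x y assume x: "x \<in> K" and y: "vle y x" "M \<le> supnorm y"
    define r where "r = supnorm y"
    have "1 \<le> r powr a" using \<open>1 \<le> M\<close> y(2) by (simp add: r_def a_def ge_one_powr_ge_zero)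
    have "vle y b" using y(1) K(2)[OF x] unfolding vle_def by (blast intro: order_trans)
    then have y_small: "\<sigma> y < ereal (- (C + \<bar>m\<bar> + 1) * r powr a)"
      using M y(2) unfolding r_def by blast
    show "\<sigma> y + ereal (C * r powr a + 1) \<le> \<sigma> x"
    proof (cases "\<sigma> x")
      case (real v)
      have "\<sigma> y + ereal (C * r powr a + 1)
          \<le> ereal (- (C + \<bar>m\<bar> + 1) * r powr a) + ereal (C * r powr a + 1)"
        using less_imp_le[OF y_small] by (rule add_right_mono)
      also have "\<dots> \<le> ereal m"
      proof -
        have "(\<bar>m\<bar> + 1) * 1 \<le> (\<bar>m\<bar> + 1) * r powr a"
          using \<open>1 \<le> r powr a\<close> by (intro mult_left_mono) auto
        then show ?thesis by (simp add: algebra_simps)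
      qed
      also have "\<dots> \<le> \<sigma> x" using m[OF x] real by simp
      finally show ?thesis .
    next
      case MInf
      then have "\<sigma> y = -\<infinity>" using StateSpace_mono[OF \<sigma> y(1)] by simp
      then show ?thesis by simp
    qed simp
  qed
qed

section \<open>Localisation of the variational formula\<close>

lemma sigma_proc_eq_sigma_trunc:
  assumes "supnorm x \<le> R"
    and far: "\<And>y. vle y x \<Longrightarrow> R < supnorm y \<Longrightarrow> \<sigma> y + Hlpp Pw y x t \<le> \<sigma> x"
  shows "sigma_proc \<sigma> Pw x t = sigma_trunc R \<sigma> Pw x t"
proof (rule antisym)
  have "\<sigma> x \<le> \<sigma> x + Hlpp Pw x x t" by (rule add_increasing2[OF Hlpp_nonneg order_refl])
  also have "\<dots> \<le> sigma_trunc R \<sigma> Pw x t"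
    unfolding sigma_trunc_def using assms(1) by (intro Sup_upper) (auto simp: vle_def)
  finally have x_le: "\<sigma> x \<le> sigma_trunc R \<sigma> Pw x t" .
  show "sigma_proc \<sigma> Pw x t \<le> sigma_trunc R \<sigma> Pw x t"
    unfolding sigma_proc_def
  proof (rule Sup_least)
    fix z assume "z \<in> {\<sigma> y + Hlpp Pw y x t | y. vle y x}"
    then obtain y where z: "z = \<sigma> y + Hlpp Pw y x t" and y: "vle y x" by blast
    show "z \<le> sigma_trunc R \<sigma> Pw x t"
    proof (cases "supnorm y \<le> R")
      case True
      then show ?thesis unfolding z sigma_trunc_def by (intro Sup_upper) (use y in blast)
    next
      case False
      then have "\<sigma> y + Hlpp Pw y x t \<le> \<sigma> x" by (intro far[OF y]) simp
      then show ?thesis unfolding z using x_le by (rule order_trans)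
    qed
  qed
  show "sigma_trunc R \<sigma> Pw x t \<le> sigma_proc \<sigma> Pw x t"
    unfolding sigma_trunc_def sigma_proc_def by (rule Sup_subset_mono) blast
qed

lemma Hlpp_far_le:
  assumes chains: "\<And>n. N \<le> n \<Longrightarrow> Hlpp Pw (\<chi> i. b $ i - real n) b T \<le> ereal (C * real n powr a + 1)"
    and "0 \<le> C" "0 \<le> a" "a \<le> 1" "vle y x" "vle x b" "t \<le> T"
    and "real N \<le> supnorm y" "supnorm b + 1 \<le> supnorm y"
  shows "Hlpp Pw y x t \<le> ereal (2 * C * supnorm y powr a + 1)"
proof -
  define r where "r = supnorm y"
  define n where "n = nat \<lceil>r + supnorm b\<rceil>"
  have n_ge: "r + supnorm b \<le> real n" and n_le: "real n \<le> 2 * r"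
    using assms(9) supnorm_nonneg[of b] by (simp_all add: n_def r_def) linarith+
  have "vle (\<chi> i. b $ i - real n) y"
    unfolding vle_def
  proof
    fix i
    have "\<bar>y $ i\<bar> \<le> r" "\<bar>b $ i\<bar> \<le> supnorm b" unfolding r_def by (rule abs_component_le_supnorm)+
    then show "(\<chi> i. b $ i - real n) $ i \<le> y $ i" using n_ge by simp
  qed
  then have "Hlpp Pw y x t \<le> Hlpp Pw (\<chi> i. b $ i - real n) b T"
    using assms(6,7) by (rule Hlpp_mono)
  also have "\<dots> \<le> ereal (C * real n powr a + 1)"
    using assms(8) n_ge supnorm_nonneg[of b] by (intro chains) (simp add: r_def)
  also have "\<dots> \<le> ereal (2 * C * r powr a + 1)"
  proof -
    have "real n powr a \<le> (2 * r) powr a" using n_le assms(3) by (intro powr_mono2) auto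
    also have "\<dots> = 2 powr a * r powr a"
      using assms(9) supnorm_nonneg[of b] by (simp add: r_def powr_mult)
    also have "\<dots> \<le> 2 * r powr a" using powr_mono[of a 1 2] assms(4) by (intro mult_right_mono) auto
    finally have "C * real n powr a \<le> C * (2 * r powr a)" using assms(2) by (rule mult_left_mono)
    then show ?thesis by simp
  qed
  finally show ?thesis by (simp add: r_def)
qed

lemma StateSpace_localization:
  fixes \<sigma> :: "real^'d \<Rightarrow> ereal"
  defines "a \<equiv> real CARD('d) / (real CARD('d) + 1)"
  assumes \<sigma>: "\<sigma> \<in> StateSpace" and "0 \<le> C"
  obtains R0 where "0 \<le> R0"
    "\<And>Pw N R x t. (\<And>n. N \<le> n \<Longrightarrow> Hlpp Pw (\<chi> i. b $ i - real n) b T \<le> ereal (C * real n powr a + 1)) \<Longrightarrow>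
      R0 + real N \<le> R \<Longrightarrow> x \<in> cbox c b \<Longrightarrow> t \<le> T \<Longrightarrow> sigma_proc \<sigma> Pw x t = sigma_trunc R \<sigma> Pw x t"
proof -
  have below_b: "vle x b" if "x \<in> cbox c b" for x
    using that by (simp add: mem_box_cart vle_def)
  obtain R1 where far: "\<And>x y. x \<in> cbox c b \<Longrightarrow> vle y x \<Longrightarrow> R1 \<le> supnorm y \<Longrightarrow>
      \<sigma> y + ereal (2 * C * supnorm y powr a + 1) \<le> \<sigma> x"
    using StateSpace_far_below[OF \<sigma> bounded_cbox below_b, folded a_def] by blast
  have a: "0 \<le> a" "a \<le> 1" by (simp_all add: a_def)
  show ?thesis
  proof (rule that[of "max R1 (supnorm c + supnorm b + 1)"])
    show "0 \<le> max R1 (supnorm c + supnorm b + 1)"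
      using supnorm_nonneg[of b] supnorm_nonneg[of c] by linarith
    fix Pw N R x t
    assume chains: "\<And>n. N \<le> n \<Longrightarrow> Hlpp Pw (\<chi> i. b $ i - real n) b T \<le> ereal (C * real n powr a + 1)"
      and R: "max R1 (supnorm c + supnorm b + 1) + real N \<le> R" and x: "x \<in> cbox c b" and "t \<le> T"
    have "supnorm x \<le> R"
      using R supnorm_le_of_mem_cbox[OF x] by linarith
    then show "sigma_proc \<sigma> Pw x t = sigma_trunc R \<sigma> Pw x t"
    proof (rule sigma_proc_eq_sigma_trunc)
      fix y assume y: "vle y x" "R < supnorm y"
      have "Hlpp Pw y x t \<le> ereal (2 * C * supnorm y powr a + 1)"
        using y R supnorm_nonneg[of b] supnorm_nonneg[of c]
        by (intro Hlpp_far_le[OF chains \<open>0 \<le> C\<close> a y(1) below_b[OF x] \<open>t \<le> T\<close>]) auto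
      then have "\<sigma> y + Hlpp Pw y x t \<le> \<sigma> y + ereal (2 * C * supnorm y powr a + 1)"
        by (rule add_left_mono)
      also have "\<dots> \<le> \<sigma> x" using y R by (intro far[OF x]) auto
      finally show "\<sigma> y + Hlpp Pw y x t \<le> \<sigma> x" .
    qed
  qed
qed

section \<open>Monotone paths of grid cells\<close>

definition mono_index_seqs :: "nat \<Rightarrow> (nat \<Rightarrow> int) set" where
  "mono_index_seqs k = {f \<in> {..<k} \<rightarrow>\<^sub>E {1..int k}. mono_on {..<k} f}"

lemma finite_mono_index_seqs: "finite (mono_index_seqs k)"
proof -
  have "mono_index_seqs k \<subseteq> {..<k} \<rightarrow>\<^sub>E {1..int k}" by (simp add: mono_index_seqs_def)
  then show ?thesis by (rule finite_subset) (intro finite_PiE; simp)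
qed

(* f is determined by the set of values f j + j, j < k, a subset of {1..2k}. *)
lemma card_mono_index_seqs: "card (mono_index_seqs k) \<le> 4 ^ k"
proof -
  define shift where "shift f = (\<lambda>j. f j + int j)" for f :: "nat \<Rightarrow> int"
  have sorted: "sorted_wrt (<) (map (shift f) [0..<k])" if "f \<in> mono_index_seqs k" for f
    using that unfolding sorted_wrt_iff_nth_less mono_index_seqs_def mono_on_def shift_def
    by (auto intro: add_le_less_mono)
  have "inj_on (\<lambda>f. shift f ` {..<k}) (mono_index_seqs k)"
  proof (rule inj_onI)
    fix f g assume f: "f \<in> mono_index_seqs k" and g: "g \<in> mono_index_seqs k"
      and "shift f ` {..<k} = shift g ` {..<k}"
    then have "map (shift g) [0..<k] = map (shift f) [0..<k]"
      by (intro strict_sorted_equal sorted) (simp_all add: atLeast0LessThan)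
    then have fg: "f j = g j" if "j < k" for j
      using that by (simp add: map_eq_conv shift_def)
    have "f \<in> {..<k} \<rightarrow>\<^sub>E {1..int k}" "g \<in> {..<k} \<rightarrow>\<^sub>E {1..int k}"
      using f g by (simp_all add: mono_index_seqs_def)
    then show "f = g" by (rule PiE_ext) (simp add: fg)
  qed
  moreover have "(\<lambda>f. shift f ` {..<k}) ` mono_index_seqs k \<subseteq> Pow {1..2 * int k}"
  proof -
    have "shift f j \<in> {1..2 * int k}" if "f \<in> mono_index_seqs k" "j < k" for f j
    proof -
      have "1 \<le> f j" "f j \<le> int k" using that by (auto simp: mono_index_seqs_def PiE_iff)
      then show ?thesis using that(2) by (simp add: shift_def)
    qed
    then show ?thesis by auto
  qed
  ultimately have "card (mono_index_seqs k) \<le> card (Pow {1..2 * int k})"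
    by (rule card_inj_on_le) simp
  also have "\<dots> = 2 ^ (2 * k)" by (simp add: card_Pow nat_mult_distrib)
  also have "\<dots> = 4 ^ k" by (simp add: power_mult)
  finally show ?thesis .
qed

definition grid_index :: "real \<Rightarrow> real \<Rightarrow> real \<Rightarrow> int" where
  "grid_index lo \<delta> x = \<lceil>(x - lo) / \<delta>\<rceil>"

lemma grid_index_bounds:
  assumes "0 < \<delta>"
  shows "lo + (of_int (grid_index lo \<delta> x) - 1) * \<delta> < x" "x \<le> lo + of_int (grid_index lo \<delta> x) * \<delta>"
proof -
  have "of_int (grid_index lo \<delta> x) - 1 < (x - lo) / \<delta>" "(x - lo) / \<delta> \<le> of_int (grid_index lo \<delta> x)"
    unfolding grid_index_def by linarith+
  then have "(of_int (grid_index lo \<delta> x) - 1) * \<delta> < x - lo" "x - lo \<le> of_int (grid_index lo \<delta> x) * \<delta>"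
    using assms by (simp_all only: pos_less_divide_eq pos_divide_le_eq)
  then show "lo + (of_int (grid_index lo \<delta> x) - 1) * \<delta> < x" "x \<le> lo + of_int (grid_index lo \<delta> x) * \<delta>"
    by linarith+
qed

lemma grid_index_range:
  assumes "0 < \<delta>" "lo < x" "x \<le> lo + real k * \<delta>"
  shows "1 \<le> grid_index lo \<delta> x" "grid_index lo \<delta> x \<le> int k"
  using assms by (simp_all add: grid_index_def pos_divide_le_eq algebra_simps ceiling_le_iff)

lemma grid_index_mono: "0 < \<delta> \<Longrightarrow> x \<le> y \<Longrightarrow> grid_index lo \<delta> x \<le> grid_index lo \<delta> y"
  unfolding grid_index_def by (intro ceiling_mono divide_right_mono) auto

definition grid_cell :: "real^'d \<Rightarrow> real \<Rightarrow> real \<Rightarrow> ('d \<Rightarrow> int) \<Rightarrow> int \<Rightarrow> ((real^'d) \<times> real) set" where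
  "grid_cell lo \<delta> \<tau> g h = stbox (\<chi> i. lo $ i + (of_int (g i) - 1) * \<delta>) ((of_int h - 1) * \<tau>)
     (\<chi> i. lo $ i + of_int (g i) * \<delta>) (of_int h * \<tau>)"

lemma measure_grid_cell_le:
  fixes lo :: "real^'d"
  assumes "0 \<le> \<delta>" "0 \<le> \<tau>"
  shows "measure lborel (grid_cell lo \<delta> \<tau> g h) \<le> \<delta> ^ CARD('d) * \<tau>"
  using measure_stbox_le[of "\<chi> i. lo $ i + (of_int (g i) - 1) * \<delta>" "\<chi> i. lo $ i + of_int (g i) * \<delta>"
      "(of_int h - 1) * \<tau>" "of_int h * \<tau>"] assms
  by (simp add: grid_cell_def vle_def algebra_simps)

lemma mem_grid_cell_grid_index:
  assumes "0 < \<delta>" "0 < \<tau>"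
  shows "(\<eta>, s) \<in> grid_cell lo \<delta> \<tau> (\<lambda>i. grid_index (lo $ i) \<delta> (\<eta> $ i)) (grid_index 0 \<tau> s)"
  using grid_index_bounds[OF assms(1)] grid_index_bounds[OF assms(2), where lo = 0 and x = s]
  by (simp add: grid_cell_def stbox_def vle_def vlt_def)

lemma strict_chain_enumerate:
  assumes "finite C" "strict_chain C" "k \<le> card C"
  obtains p where "p ` {..<k} \<subseteq> C"
    "\<And>i j. i < j \<Longrightarrow> j < k \<Longrightarrow> vlt (fst (p i)) (fst (p j)) \<and> snd (p i) < snd (p j)"
proof -
  have "inj_on snd C"
    using assms(2) unfolding strict_chain_def inj_on_def by force
  define ts where "ts = sorted_list_of_set (snd ` C)"
  have len: "length ts = card C"
    using \<open>inj_on snd C\<close> by (simp add: ts_def card_image)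
  define p where "p j = inv_into C snd (ts ! j)" for j
  have p: "p j \<in> C" "snd (p j) = ts ! j" if "j < card C" for j
  proof -
    have "ts ! j \<in> snd ` C" using that len assms(1) nth_mem[of j ts] by (simp add: ts_def)
    then show "p j \<in> C" "snd (p j) = ts ! j" unfolding p_def by (auto intro: inv_into_into f_inv_into_f)
  qed
  show ?thesis
  proof
    show "p ` {..<k} \<subseteq> C" using p(1) assms(3) by auto
    fix i j assume "i < j" "j < k"
    moreover have "sorted_wrt (<) ts" by (simp add: ts_def)
    ultimately have "ts ! i < ts ! j" using assms(3) len by (auto intro: sorted_wrt_nth_less)
    then have "snd (p i) < snd (p j)" using p(2) \<open>i < j\<close> \<open>j < k\<close> assms(3) by simp
    moreover have "p i \<in> C" "p j \<in> C" using p(1) \<open>i < j\<close> \<open>j < k\<close> assms(3) by auto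
    ultimately show "vlt (fst (p i)) (fst (p j)) \<and> snd (p i) < snd (p j)"
      using assms(2) unfolding strict_chain_def by force
  qed
qed

definition cell_path ::
  "real^'d \<Rightarrow> real \<Rightarrow> real \<Rightarrow> nat \<Rightarrow> ('d \<Rightarrow> nat \<Rightarrow> int) \<Rightarrow> (nat \<Rightarrow> int) \<Rightarrow> ((real^'d) \<times> real) set" where
  "cell_path lo \<delta> \<tau> k g h = (\<Union>j<k. grid_cell lo \<delta> \<tau> (\<lambda>i. g i j) (h j))"

definition cell_paths :: "nat \<Rightarrow> (('d::finite \<Rightarrow> nat \<Rightarrow> int) \<times> (nat \<Rightarrow> int)) set" where
  "cell_paths k = (\<Pi>\<^sub>E i\<in>UNIV. mono_index_seqs k) \<times> mono_index_seqs k"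

lemma cell_path_borel: "cell_path lo \<delta> \<tau> k g h \<in> sets borel"
  unfolding cell_path_def grid_cell_def by (intro sets.finite_UN) (auto simp: stbox_borel)

lemma bounded_cell_path: "bounded (cell_path lo \<delta> \<tau> k g h)"
  unfolding cell_path_def grid_cell_def by (intro bounded_UN) (auto simp: bounded_stbox)

lemma cell_path_positive_time:
  assumes "h \<in> mono_index_seqs k" "0 \<le> \<tau>"
  shows "cell_path lo \<delta> \<tau> k g h \<subseteq> UNIV \<times> {0<..}"
proof -
  have "0 \<le> (of_int (h j) - 1) * \<tau>" if "j < k" for j
    using assms that by (auto simp: mono_index_seqs_def PiE_iff)
  then show ?thesis
    unfolding cell_path_def grid_cell_def using stbox_subset_positive_time by blast
qed

lemma measure_cell_path_le:
  fixes lo :: "real^'d"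
  assumes "0 \<le> \<delta>" "0 \<le> \<tau>"
  shows "measure lborel (cell_path lo \<delta> \<tau> k g h) \<le> real k * (\<delta> ^ CARD('d) * \<tau>)"
proof -
  have "measure lborel (cell_path lo \<delta> \<tau> k g h)
      \<le> (\<Sum>j<k. measure lborel (grid_cell lo \<delta> \<tau> (\<lambda>i. g i j) (h j)))"
    unfolding cell_path_def grid_cell_def by (rule measure_UNION_le) (auto simp: stbox_borel)
  also have "\<dots> \<le> (\<Sum>j<k. \<delta> ^ CARD('d) * \<tau>)"
    by (intro sum_mono measure_grid_cell_le assms)
  finally show ?thesis by simp
qed

lemma finite_cell_paths: "finite (cell_paths k)"
  unfolding cell_paths_def
  by (intro finite_cartesian_product finite_PiE finite_mono_index_seqs) auto

lemma card_cell_paths_le: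
  "card (cell_paths k :: (('d::finite \<Rightarrow> nat \<Rightarrow> int) \<times> (nat \<Rightarrow> int)) set) \<le> 4 ^ (k * (CARD('d) + 1))"
proof -
  let ?paths = "cell_paths k :: (('d \<Rightarrow> nat \<Rightarrow> int) \<times> (nat \<Rightarrow> int)) set"
  have "card ?paths = card (mono_index_seqs k) ^ CARD('d) * card (mono_index_seqs k)"
    by (simp add: cell_paths_def card_cartesian_product card_PiE)
  also have "\<dots> \<le> (4 ^ k) ^ CARD('d) * 4 ^ k"
    using card_mono_index_seqs[of k] by (intro mult_mono power_mono) auto
  also have "\<dots> = 4 ^ (k * (CARD('d) + 1))"
    by (simp add: power_mult[symmetric] power_add algebra_simps)
  finally show ?thesis .
qed

lemma restrict_grid_index_mem_mono_index_seqs: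
  assumes "0 < \<delta>" and range: "\<And>j. j < k \<Longrightarrow> lo < u j \<and> u j \<le> lo + real k * \<delta>"
    and mono: "\<And>j j'. j \<le> j' \<Longrightarrow> j' < k \<Longrightarrow> u j \<le> u j'"
  shows "(\<lambda>j\<in>{..<k}. grid_index lo \<delta> (u j)) \<in> mono_index_seqs k"
  unfolding mono_index_seqs_def mem_Collect_eq
proof
  show "(\<lambda>j\<in>{..<k}. grid_index lo \<delta> (u j)) \<in> {..<k} \<rightarrow>\<^sub>E {1..int k}"
    unfolding restrict_PiE_iff
  proof
    fix j assume "j \<in> {..<k}"
    then show "grid_index lo \<delta> (u j) \<in> {1..int k}"
      using range[of j] grid_index_range[OF assms(1), of lo "u j" k] by simp
  qed
  show "mono_on {..<k} (\<lambda>j\<in>{..<k}. grid_index lo \<delta> (u j))"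
    by (rule mono_onI) (simp add: grid_index_mono[OF assms(1)] mono)
qed

lemma cell_path_through_points:
  fixes lo :: "real^'d" and p :: "nat \<Rightarrow> (real^'d) \<times> real"
  assumes "0 < \<delta>" "0 < \<tau>"
    and space: "\<And>i j. j < k \<Longrightarrow> lo $ i < fst (p j) $ i \<and> fst (p j) $ i \<le> lo $ i + real k * \<delta>"
    and time: "\<And>j. j < k \<Longrightarrow> 0 < snd (p j) \<and> snd (p j) \<le> 0 + real k * \<tau>"
    and mono: "\<And>i j j'. j \<le> j' \<Longrightarrow> j' < k \<Longrightarrow> fst (p j) $ i \<le> fst (p j') $ i \<and> snd (p j) \<le> snd (p j')"
  obtains g h where "(g, h) \<in> cell_paths k" "p ` {..<k} \<subseteq> cell_path lo \<delta> \<tau> k g h"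
proof
  define g where "g i = (\<lambda>j\<in>{..<k}. grid_index (lo $ i) \<delta> (fst (p j) $ i))" for i
  define h where "h = (\<lambda>j\<in>{..<k}. grid_index 0 \<tau> (snd (p j)))"
  have "g i \<in> mono_index_seqs k" for i
    unfolding g_def using space mono
    by (intro restrict_grid_index_mem_mono_index_seqs[OF assms(1)]) auto
  moreover have "h \<in> mono_index_seqs k"
    unfolding h_def using time mono
    by (intro restrict_grid_index_mem_mono_index_seqs[OF assms(2)]) auto
  ultimately show "(g, h) \<in> cell_paths k" by (simp add: cell_paths_def PiE_iff)
  show "p ` {..<k} \<subseteq> cell_path lo \<delta> \<tau> k g h"
  proof
    fix q assume "q \<in> p ` {..<k}"
    then obtain j where j: "j < k" "q = p j" by blast
    have "(fst q, snd q) \<in> grid_cell lo \<delta> \<tau> (\<lambda>i. g i j) (h j)"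
      using mem_grid_cell_grid_index[OF assms(1,2), where \<eta> = "fst q" and lo = lo and s = "snd q"] j
      by (simp add: g_def h_def)
    then show "q \<in> cell_path lo \<delta> \<tau> k g h" unfolding cell_path_def using j(1) by auto
  qed
qed

lemma long_chain_in_cell_path:
  fixes lo :: "real^'d"
  assumes "0 < \<delta>" "0 < \<tau>" and Pw: "\<And>B. bounded B \<Longrightarrow> finite (Pw \<inter> B)"
    and x: "\<And>i. x $ i \<le> lo $ i + real k * \<delta>" and t: "t \<le> real k * \<tau>"
    and long: "ereal (real k) \<le> Hlpp Pw lo x t"
  obtains g h where "(g, h) \<in> cell_paths k" "k \<le> card (Pw \<inter> cell_path lo \<delta> \<tau> k g h)"
proof -
  obtain C where C: "finite C" "strict_chain C" "C \<subseteq> Pw \<inter> stbox lo 0 x t"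
    and "Hlpp Pw lo x t = ereal (card C)"
    using Hlpp_attained[OF Pw[OF bounded_stbox]] by blast
  then have "k \<le> card C" using long by simp
  then obtain p where p: "p ` {..<k} \<subseteq> C"
    and incr: "\<And>i j. i < j \<Longrightarrow> j < k \<Longrightarrow> vlt (fst (p i)) (fst (p j)) \<and> snd (p i) < snd (p j)"
    using strict_chain_enumerate[OF C(1,2)] by blast
  have in_box: "lo $ i < fst (p j) $ i \<and> fst (p j) $ i \<le> lo $ i + real k * \<delta>"
    "0 < snd (p j) \<and> snd (p j) \<le> 0 + real k * \<tau>" if "j < k" for i j
  proof -
    have "p j \<in> stbox lo 0 x t" using p C(3) that by blast
    then have "lo $ i < fst (p j) $ i" "fst (p j) $ i \<le> x $ i" "0 < snd (p j)" "snd (p j) \<le> t"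
      unfolding stbox_def vlt_def vle_def by (auto simp: case_prod_beta)
    then show "lo $ i < fst (p j) $ i \<and> fst (p j) $ i \<le> lo $ i + real k * \<delta>"
      "0 < snd (p j) \<and> snd (p j) \<le> 0 + real k * \<tau>"
      using x[of i] t by simp_all
  qed
  have "fst (p j) $ i \<le> fst (p j') $ i \<and> snd (p j) \<le> snd (p j')" if "j \<le> j'" "j' < k" for i j j'
  proof (cases "j = j'")
    case False
    then show ?thesis using incr[of j j'] that unfolding vlt_def by (auto intro: less_imp_le)
  qed simp
  note mono = this
  obtain g h where gh: "(g, h) \<in> cell_paths k" and "p ` {..<k} \<subseteq> cell_path lo \<delta> \<tau> k g h"
    using cell_path_through_points[where p = p, OF assms(1,2) in_box mono] by blast
  with p C(3) have sub: "p ` {..<k} \<subseteq> Pw \<inter> cell_path lo \<delta> \<tau> k g h" by blast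
  have "inj_on p {..<k}"
  proof (rule inj_onI)
    fix i j assume "i \<in> {..<k}" "j \<in> {..<k}" "p i = p j"
    then show "i = j" using incr[of i j] incr[of j i] by (cases i j rule: linorder_cases) auto
  qed
  then have "k = card (p ` {..<k})" by (simp add: card_image)
  also have "\<dots> \<le> card (Pw \<inter> cell_path lo \<delta> \<tau> k g h)"
    by (rule card_mono[OF Pw[OF bounded_cell_path] sub])
  finally show ?thesis using gh by (intro that)
qed

section \<open>Poisson bounds for long chains\<close>

lemma poisson_pp_prob_space: "poisson_pp M P \<Longrightarrow> prob_space M"
  unfolding poisson_pp_def by (elim conjE)

lemma poisson_pp_locally_finite:
  assumes "poisson_pp M P" "\<omega> \<in> space M" "bounded B"
  shows "finite (P \<omega> \<inter> B)"
proof -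
  have "\<forall>\<omega>\<in>space M. P \<omega> \<subseteq> UNIV \<times> {0<..} \<and> (\<forall>B. bounded B \<longrightarrow> finite (P \<omega> \<inter> B))"
    using assms(1) unfolding poisson_pp_def by (elim conjE)
  then show ?thesis using assms(2,3) by blast
qed

lemma poisson_pp_count:
  assumes "poisson_pp M P" "B \<in> sets borel" "bounded B" "B \<subseteq> UNIV \<times> {0<..}"
  shows "(\<lambda>\<omega>. card (P \<omega> \<inter> B)) \<in> measurable M (count_space UNIV)"
    and "measure M {\<omega> \<in> space M. card (P \<omega> \<inter> B) = k}
      = measure lborel B ^ k / fact k * exp (- measure lborel B)"
  using assms unfolding poisson_pp_def by blast+

lemma poisson_pp_count_ge_sets:
  assumes "poisson_pp M P" "B \<in> sets borel" "bounded B" "B \<subseteq> UNIV \<times> {0<..}"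
  shows "{\<omega> \<in> space M. k \<le> card (P \<omega> \<inter> B)} \<in> sets M"
proof -
  have "(\<lambda>\<omega>. card (P \<omega> \<inter> B)) -` {k..} \<inter> space M \<in> sets M"
    using poisson_pp_count(1)[OF assms] by (rule measurable_sets) simp
  then show ?thesis by (simp add: vimage_def Int_def conj_commute)
qed

lemma poisson_pp_count_tail:
  assumes pp: "poisson_pp M P" and B: "B \<in> sets borel" "bounded B" "B \<subseteq> UNIV \<times> {0<..}"
  shows "measure M {\<omega> \<in> space M. k \<le> card (P \<omega> \<inter> B)} \<le> measure lborel B ^ k / fact k"
proof -
  interpret prob_space M using pp by (rule poisson_pp_prob_space)
  define m where "m = measure lborel B"
  let ?N = "\<lambda>\<omega>. card (P \<omega> \<inter> B)"
  have sets: "{\<omega> \<in> space M. ?N \<omega> \<in> S} \<in> sets M" for S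
    using measurable_sets[OF poisson_pp_count(1)[OF pp B], of S]
    by (simp add: vimage_def Int_def conj_commute)
  have "{\<omega> \<in> space M. ?N \<omega> < k} = (\<Union>j<k. {\<omega> \<in> space M. ?N \<omega> = j})" by auto
  then have "measure M {\<omega> \<in> space M. ?N \<omega> < k} = measure M (\<Union>j<k. {\<omega> \<in> space M. ?N \<omega> = j})"
    by simp
  also have "\<dots> = (\<Sum>j<k. measure M {\<omega> \<in> space M. ?N \<omega> = j})"
    using sets[of "{_}"] by (intro finite_measure_finite_Union) (auto simp: disjoint_family_on_def)
  also have "\<dots> = exp (- m) * (\<Sum>j<k. m ^ j / fact j)"
    by (simp add: poisson_pp_count(2)[OF pp B] m_def sum_distrib_left mult.commute)
  finally have below: "measure M {\<omega> \<in> space M. ?N \<omega> < k} = exp (- m) * (\<Sum>j<k. m ^ j / fact j)" .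
  obtain t where t: "\<bar>t\<bar> \<le> \<bar>m\<bar>" "exp m = (\<Sum>j<k. m ^ j / fact j) + exp t / fact k * m ^ k"
    using Maclaurin_exp_le[of m k] by blast
  have "{\<omega> \<in> space M. k \<le> ?N \<omega>} = space M - {\<omega> \<in> space M. ?N \<omega> < k}" by auto
  then have "measure M {\<omega> \<in> space M. k \<le> ?N \<omega>} = 1 - exp (- m) * (\<Sum>j<k. m ^ j / fact j)"
    using prob_compl[OF sets[of "{..<k}"]] below by simp
  also have "\<dots> = exp (- m) * (exp m - (\<Sum>j<k. m ^ j / fact j))"
    by (simp add: algebra_simps exp_minus_inverse)
  also have "\<dots> = exp (- m) * (exp t / fact k * m ^ k)"
    using t(2) by simp
  also have "\<dots> = exp (t - m) * (m ^ k / fact k)"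
    by (simp add: exp_diff exp_minus field_simps)
  also have "\<dots> \<le> m ^ k / fact k"
    using t(1) by (intro mult_left_le_one_le) (auto simp: m_def)
  finally show ?thesis by (simp add: m_def)
qed

(* Hlpp (P \<omega>) is not known to be measurable in \<omega>; this finite union of Poisson counting events is,
   and by long_chain_event_cover it contains the event that a chain of length k exists. *)
definition long_chain_event ::
  "'a measure \<Rightarrow> ('a \<Rightarrow> ((real^'d) \<times> real) set) \<Rightarrow> real^'d \<Rightarrow> real \<Rightarrow> real \<Rightarrow> nat \<Rightarrow> 'a set" where
  "long_chain_event M P lo \<delta> \<tau> k =
     (\<Union>gh\<in>cell_paths k. {\<omega> \<in> space M. k \<le> card (P \<omega> \<inter> cell_path lo \<delta> \<tau> k (fst gh) (snd gh))})"

lemma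
  fixes lo :: "real^'d"
  assumes "poisson_pp M P" "(g, h) \<in> cell_paths k" "0 \<le> \<tau>"
  shows cell_path_event_sets: "{\<omega> \<in> space M. k \<le> card (P \<omega> \<inter> cell_path lo \<delta> \<tau> k g h)} \<in> sets M"
    and cell_path_event_measure_le: "0 \<le> \<delta> \<Longrightarrow>
      measure M {\<omega> \<in> space M. k \<le> card (P \<omega> \<inter> cell_path lo \<delta> \<tau> k g h)}
        \<le> (real k * (\<delta> ^ CARD('d) * \<tau>)) ^ k / fact k"
proof -
  have "h \<in> mono_index_seqs k" using assms(2) by (simp add: cell_paths_def)
  then have B: "cell_path lo \<delta> \<tau> k g h \<in> sets borel" "bounded (cell_path lo \<delta> \<tau> k g h)"
    "cell_path lo \<delta> \<tau> k g h \<subseteq> UNIV \<times> {0<..}"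
    using assms(3) by (simp_all add: cell_path_borel bounded_cell_path cell_path_positive_time)
  show "{\<omega> \<in> space M. k \<le> card (P \<omega> \<inter> cell_path lo \<delta> \<tau> k g h)} \<in> sets M"
    by (rule poisson_pp_count_ge_sets[OF assms(1) B])
  assume "0 \<le> \<delta>"
  have "measure M {\<omega> \<in> space M. k \<le> card (P \<omega> \<inter> cell_path lo \<delta> \<tau> k g h)}
      \<le> measure lborel (cell_path lo \<delta> \<tau> k g h) ^ k / fact k"
    by (rule poisson_pp_count_tail[OF assms(1) B])
  also have "\<dots> \<le> (real k * (\<delta> ^ CARD('d) * \<tau>)) ^ k / fact k"
    by (intro divide_right_mono power_mono measure_cell_path_le \<open>0 \<le> \<delta>\<close> assms(3)) auto
  finally show "measure M {\<omega> \<in> space M. k \<le> card (P \<omega> \<inter> cell_path lo \<delta> \<tau> k g h)}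
        \<le> (real k * (\<delta> ^ CARD('d) * \<tau>)) ^ k / fact k" .
qed

lemma sets_long_chain_event: "poisson_pp M P \<Longrightarrow> 0 \<le> \<tau> \<Longrightarrow> long_chain_event M P lo \<delta> \<tau> k \<in> sets M"
  unfolding long_chain_event_def
  by (intro sets.finite_UN finite_cell_paths ballI cell_path_event_sets) simp_all

lemma power_div_fact_le_exp:
  fixes x :: real
  assumes "0 \<le> x"
  shows "x ^ k / fact k \<le> exp x"
proof -
  have "(\<Sum>j\<in>{k}. x ^ j / fact j) \<le> (\<Sum>j. x ^ j / fact j)"
    using summable_exp[of x] assms by (intro sum_le_suminf) (auto simp: divide_inverse mult.commute)
  then show ?thesis by (simp add: exp_def divide_inverse mult.commute scaleR_conv_of_real)
qed

lemma mult_power_div_fact_le: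
  fixes x :: real
  assumes "0 \<le> x"
  shows "(real k * x) ^ k / fact k \<le> (exp 1 * x) ^ k"
proof -
  have "(real k * x) ^ k / fact k = x ^ k * (real k ^ k / fact k)"
    by (simp add: power_mult_distrib)
  also have "\<dots> \<le> x ^ k * exp (real k)"
    using assms by (intro mult_left_mono power_div_fact_le_exp) auto
  also have "\<dots> = (exp 1 * x) ^ k"
    by (simp add: power_mult_distrib exp_of_nat_mult[symmetric] mult.commute)
  finally show ?thesis .
qed

lemma measure_long_chain_event_le:
  fixes lo :: "real^'d"
  assumes pp: "poisson_pp M P" and "0 \<le> \<delta>" "0 \<le> \<tau>"
  shows "measure M (long_chain_event M P lo \<delta> \<tau> k)
    \<le> (4 ^ (CARD('d) + 1) * exp 1 * \<delta> ^ CARD('d) * \<tau>) ^ k"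
proof -
  interpret prob_space M using pp by (rule poisson_pp_prob_space)
  let ?paths = "cell_paths k :: (('d \<Rightarrow> nat \<Rightarrow> int) \<times> (nat \<Rightarrow> int)) set"
  let ?bound = "(real k * (\<delta> ^ CARD('d) * \<tau>)) ^ k / fact k"
  have "measure M (long_chain_event M P lo \<delta> \<tau> k)
      \<le> (\<Sum>gh\<in>?paths. measure M {\<omega> \<in> space M. k \<le> card (P \<omega> \<inter> cell_path lo \<delta> \<tau> k (fst gh) (snd gh))})"
    unfolding long_chain_event_def
    by (intro measure_UNION_le finite_cell_paths cell_path_event_sets[OF pp _ assms(3)]) simp
  also have "\<dots> \<le> (\<Sum>_\<in>?paths. ?bound)"
    by (intro sum_mono cell_path_event_measure_le[OF pp _ assms(3,2)]) simp
  also have "\<dots> = real (card ?paths) * ?bound"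
    by simp
  also have "\<dots> \<le> 4 ^ (k * (CARD('d) + 1)) * (exp 1 * (\<delta> ^ CARD('d) * \<tau>)) ^ k"
  proof (rule mult_mono)
    have "real (card ?paths) \<le> real (4 ^ (k * (CARD('d) + 1)))"
      by (rule of_nat_mono[OF card_cell_paths_le])
    then show "real (card ?paths) \<le> 4 ^ (k * (CARD('d) + 1))"
      by simp
    show "?bound \<le> (exp 1 * (\<delta> ^ CARD('d) * \<tau>)) ^ k"
      using assms(2,3) by (intro mult_power_div_fact_le) simp
  qed (use assms(2,3) in simp_all)
  also have "\<dots> = (4 ^ (CARD('d) + 1) * exp 1 * \<delta> ^ CARD('d) * \<tau>) ^ k"
  proof -
    have "(4::real) ^ (k * (CARD('d) + 1)) = (4 ^ (CARD('d) + 1)) ^ k"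
      by (metis mult.commute power_mult)
    then show ?thesis by (simp add: power_mult_distrib mult.assoc)
  qed
  finally show ?thesis .
qed

lemma long_chain_event_cover:
  fixes lo :: "real^'d"
  assumes pp: "poisson_pp M P" and "\<omega> \<in> space M" "0 < \<delta>" "0 < \<tau>"
    and "\<And>i. x $ i \<le> lo $ i + real k * \<delta>" "t \<le> real k * \<tau>"
    and "ereal (real k) \<le> Hlpp (P \<omega>) lo x t"
  shows "\<omega> \<in> long_chain_event M P lo \<delta> \<tau> k"
proof -
  obtain g h where "(g, h) \<in> cell_paths k" "k \<le> card (P \<omega> \<inter> cell_path lo \<delta> \<tau> k g h)"
    using long_chain_in_cell_path[OF assms(3,4) poisson_pp_locally_finite[OF pp assms(2)] assms(5-7)]
    by blast
  then show ?thesis using assms(2) unfolding long_chain_event_def by (intro UN_I[of "(g, h)"]) auto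
qed

section \<open>Almost sure sublinear growth of chains\<close>

lemma mult_powr_le_imp_power_ge:
  fixes X :: real
  assumes "0 \<le> X"
  obtains C where "1 \<le> C"
    "\<And>n \<kappa>. 0 < n \<Longrightarrow> C * n powr (real d / (real d + 1)) \<le> \<kappa> \<Longrightarrow> X * n ^ d \<le> \<kappa> ^ (d + 1)"
proof
  define C where "C = max 1 (X powr (1 / (real d + 1)))"
  show "1 \<le> C" by (simp add: C_def)
  fix n \<kappa> :: real assume n: "0 < n" and \<kappa>: "C * n powr (real d / (real d + 1)) \<le> \<kappa>"
  have "X \<le> C ^ (d + 1)"
  proof (cases "X = 0")
    case False
    then have "0 < X" using assms by simp
    have "(X powr (1 / (real d + 1))) ^ (d + 1) = (X powr (1 / (real d + 1))) powr real (d + 1)"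
      by (rule powr_realpow[symmetric]) (use \<open>0 < X\<close> in simp)
    also have "\<dots> = X powr (1 / (real d + 1) * real (d + 1))" by (rule powr_powr)
    also have "\<dots> = X" using \<open>0 < X\<close> by (simp add: add.commute)
    finally have "X = (X powr (1 / (real d + 1))) ^ (d + 1)" by simp
    also have "\<dots> \<le> C ^ (d + 1)" by (intro power_mono) (auto simp: C_def)
    finally show ?thesis .
  qed (simp add: C_def)
  have "(n powr (real d / (real d + 1))) ^ (d + 1)
      = (n powr (real d / (real d + 1))) powr real (d + 1)"
    by (rule powr_realpow[symmetric]) (use n in simp)
  also have "\<dots> = n powr (real d / (real d + 1) * real (d + 1))" by (rule powr_powr)
  also have "real d / (real d + 1) * real (d + 1) = real d" by (simp add: field_simps)
  also have "n powr real d = n ^ d" using n by (rule powr_realpow)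
  finally have n_pow: "(n powr (real d / (real d + 1))) ^ (d + 1) = n ^ d" .
  have "X * n ^ d \<le> C ^ (d + 1) * n ^ d"
    using \<open>X \<le> C ^ (d + 1)\<close> n by (intro mult_right_mono) simp_all
  also have "\<dots> = (C * n powr (real d / (real d + 1))) ^ (d + 1)"
    by (simp only: power_mult_distrib n_pow)
  also have "\<dots> \<le> \<kappa> ^ (d + 1)"
    using \<kappa> \<open>1 \<le> C\<close> by (intro power_mono) auto
  finally show "X * n ^ d \<le> \<kappa> ^ (d + 1)" .
qed

lemma measure_long_chain_event_le_half_pow:
  fixes lo :: "real^'d"
  assumes pp: "poisson_pp M P" and "0 < k" "0 \<le> w" "0 \<le> T"
    and big: "2 * 4 ^ (CARD('d) + 1) * exp 1 * T * w ^ CARD('d) \<le> real k ^ (CARD('d) + 1)"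
  shows "measure M (long_chain_event M P lo (w / real k) (T / real k) k) \<le> (1 / 2) ^ k"
proof -
  have "measure M (long_chain_event M P lo (w / real k) (T / real k) k)
      \<le> (4 ^ (CARD('d) + 1) * exp 1 * (w / real k) ^ CARD('d) * (T / real k)) ^ k"
    using assms(3,4) by (intro measure_long_chain_event_le[OF pp]) simp_all
  also have "\<dots> \<le> (1 / 2) ^ k"
  proof (rule power_mono)
    have "4 ^ (CARD('d) + 1) * exp 1 * (w / real k) ^ CARD('d) * (T / real k)
        = 2 * 4 ^ (CARD('d) + 1) * exp 1 * T * w ^ CARD('d) / real k ^ (CARD('d) + 1) / 2"
      by (simp add: power_divide field_simps)
    also have "\<dots> \<le> 1 / 2" using big \<open>0 < k\<close> by (simp add: pos_divide_le_eq mult_ac)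
    finally show "4 ^ (CARD('d) + 1) * exp 1 * (w / real k) ^ CARD('d) * (T / real k) \<le> 1 / 2" .
  qed (use assms(3,4) in simp)
  finally show ?thesis .
qed

lemma summable_half_powr_sqrt: "summable (\<lambda>n::nat. (1 / 2 :: real) powr sqrt (real n))"
proof (rule summable_comparison_test_bigo)
  show "summable (\<lambda>n. norm (1 / real n ^ 2 :: real))"
    using inverse_power_summable[of 2, where 'a = real] by (simp add: inverse_eq_divide)
  show "(\<lambda>n::nat. (1 / 2 :: real) powr sqrt (real n)) \<in> O(\<lambda>n. 1 / real n ^ 2)"
    by real_asymp
qed

lemma chain_length_schedule:
  fixes X :: real
  assumes "0 \<le> X" "0 < d"
  obtains C k where "0 \<le> C"
    "\<And>n. real (k n) \<le> C * real n powr (real d / (real d + 1)) + 1"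
    "\<And>n. 0 < n \<Longrightarrow> sqrt (real n) \<le> real (k n)"
    "\<And>n. 0 < n \<Longrightarrow> X * real n ^ d \<le> real (k n) ^ (d + 1)"
proof -
  define a where "a = real d / (real d + 1)"
  obtain C where "1 \<le> C" and C: "\<And>n \<kappa>. 0 < n \<Longrightarrow> C * n powr a \<le> \<kappa> \<Longrightarrow> X * n ^ d \<le> \<kappa> ^ (d + 1)"
    using mult_powr_le_imp_power_ge[OF assms(1), of d, folded a_def] by blast
  define k where "k n = nat \<lceil>C * real n powr a\<rceil>" for n :: nat
  have k: "C * real n powr a \<le> real (k n)" "real (k n) \<le> C * real n powr a + 1" for n
  proof -
    have "0 \<le> C * real n powr a" using \<open>1 \<le> C\<close> by simp
    then have "real (k n) = of_int \<lceil>C * real n powr a\<rceil>" by (simp add: k_def)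
    then show "C * real n powr a \<le> real (k n)" "real (k n) \<le> C * real n powr a + 1"
      using ceiling_correct[of "C * real n powr a"] by linarith+
  qed
  show ?thesis
  proof (rule that[of C k])
    show "0 \<le> C" "real (k n) \<le> C * real n powr (real d / (real d + 1)) + 1" for n
      using \<open>1 \<le> C\<close> k(2) by (simp_all add: a_def)
    show "X * real n ^ d \<le> real (k n) ^ (d + 1)" if "0 < n" for n
      using that by (intro C k(1)) simp
    show "sqrt (real n) \<le> real (k n)" if "0 < n" for n
    proof -
      have "sqrt (real n) = real n powr (1 / 2)" by (simp add: powr_half_sqrt)
      also have "\<dots> \<le> real n powr a"
        using that assms(2) by (intro powr_mono) (auto simp: a_def field_simps)
      also have "\<dots> \<le> C * real n powr a"
        using mult_right_mono[OF \<open>1 \<le> C\<close>, of "real n powr a"] by simp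
      finally show ?thesis using k(1)[of n] by linarith
    qed
  qed
qed

lemma sublinear_chains_outside_events:
  fixes b :: "real^'d"
  defines "a \<equiv> real CARD('d) / (real CARD('d) + 1)"
  assumes pp: "poisson_pp M P" and T: "0 < T"
  obtains C A where "0 \<le> C" "\<And>n. A n \<in> sets M" "summable (\<lambda>n. measure M (A n))"
    "\<And>\<omega> n. \<omega> \<in> space M \<Longrightarrow> 0 < n \<Longrightarrow> \<omega> \<notin> A n \<Longrightarrow>
       Hlpp (P \<omega>) (\<chi> i. b $ i - real n) b T \<le> ereal (C * real n powr a + 1)"
proof -
  obtain C k where "0 \<le> C" and k_le: "\<And>n. real (k n) \<le> C * real n powr a + 1"
    and sqrt_le_k: "\<And>n. 0 < n \<Longrightarrow> sqrt (real n) \<le> real (k n)"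
    and k_big: "\<And>n. 0 < n \<Longrightarrow>
      2 * 4 ^ (CARD('d) + 1) * exp 1 * T * real n ^ CARD('d) \<le> real (k n) ^ (CARD('d) + 1)"
    using chain_length_schedule[of "2 * 4 ^ (CARD('d) + 1) * exp 1 * T" "CARD('d)", folded a_def] T
    by auto
  have k_pos: "0 < k n" if "0 < n" for n
  proof -
    have "1 \<le> sqrt (real n)" using that by simp
    then have "1 \<le> real (k n)" using sqrt_le_k[OF that] by linarith
    then show ?thesis by simp
  qed
  define A where
    "A n = long_chain_event M P (\<chi> i. b $ i - real n) (real n / k n) (T / k n) (k n)" for n
  have A_le: "measure M (A n) \<le> (1 / 2) powr sqrt (real n)" if "0 < n" for n
  proof -
    have "measure M (A n) \<le> (1 / 2) ^ k n"
      unfolding A_def using k_pos[OF that] k_big[OF that] T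
      by (intro measure_long_chain_event_le_half_pow[OF pp]) auto
    also have "\<dots> = (1 / 2) powr real (k n)" by (simp add: powr_realpow)
    also have "\<dots> \<le> (1 / 2) powr sqrt (real n)" using sqrt_le_k[OF that] by (intro powr_mono') auto
    finally show ?thesis .
  qed
  show ?thesis
  proof (rule that[OF \<open>0 \<le> C\<close>])
    show "A n \<in> sets M" for n unfolding A_def using T by (intro sets_long_chain_event pp) simp
    show "summable (\<lambda>n. measure M (A n))"
      using summable_half_powr_sqrt
      by (rule summable_comparison_test'[where N = 1]) (simp add: A_le)
    fix \<omega> n assume \<omega>: "\<omega> \<in> space M" and "0 < n" "\<omega> \<notin> A n"
    have "\<not> ereal (real (k n)) \<le> Hlpp (P \<omega>) (\<chi> i. b $ i - real n) b T"
    proof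
      assume "ereal (real (k n)) \<le> Hlpp (P \<omega>) (\<chi> i. b $ i - real n) b T"
      then have "\<omega> \<in> A n"
        unfolding A_def using k_pos[OF \<open>0 < n\<close>] \<open>0 < n\<close> T
        by (intro long_chain_event_cover[OF pp \<omega>]) auto
      then show False using \<open>\<omega> \<notin> A n\<close> by simp
    qed
    then have "Hlpp (P \<omega>) (\<chi> i. b $ i - real n) b T \<le> ereal (real (k n))" by simp
    also have "\<dots> \<le> ereal (C * real n powr a + 1)" using k_le by simp
    finally show "Hlpp (P \<omega>) (\<chi> i. b $ i - real n) b T \<le> ereal (C * real n powr a + 1)" .
  qed
qed

lemma (in finite_measure) borel_cantelli_eventually_index:
  assumes [measurable]: "\<And>n. A n \<in> sets M" and "summable (\<lambda>n. measure M (A n))"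
  obtains N where "N \<in> measurable M (count_space UNIV)" "AE \<omega> in M. \<forall>n\<ge>N \<omega>. \<omega> \<notin> A n"
proof
  define N where "N \<omega> = (LEAST N. \<forall>n\<ge>N. \<omega> \<notin> A n)" for \<omega>
  show "N \<in> measurable M (count_space UNIV)" unfolding N_def by measurable
  have "AE \<omega> in M. eventually (\<lambda>n. \<omega> \<in> space M - A n) sequentially"
    using assms by (intro borel_cantelli_AE1) (auto simp: less_top[symmetric] emeasure_finite)
  then show "AE \<omega> in M. \<forall>n\<ge>N \<omega>. \<omega> \<notin> A n"
  proof (rule eventually_mono)
    fix \<omega> assume "eventually (\<lambda>n. \<omega> \<in> space M - A n) sequentially"
    then have "\<exists>N. \<forall>n\<ge>N. \<omega> \<notin> A n" by (auto simp: eventually_sequentially)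
    then show "\<forall>n\<ge>N \<omega>. \<omega> \<notin> A n" unfolding N_def by (rule LeastI_ex)
  qed
qed

theorem corollary7p6:
  fixes M :: "'a measure" and P :: "'a \<Rightarrow> ((real^'d) \<times> real) set"
    and \<sigma> :: "real^'d \<Rightarrow> ereal" and c :: "real^'d" and L T :: real
  assumes "CARD('d) \<ge> 2"
    and "poisson_pp M P"
    and "\<sigma> \<in> StateSpace"
    and "L \<ge> 0"
    and "0 < T"
  shows "\<exists>R :: 'a \<Rightarrow> real. R \<in> borel_measurable M \<and>
           (AE \<omega> in M. 0 < R \<omega> \<and>
              (\<forall>x t. (\<forall>i. c$i \<le> x$i \<and> x$i \<le> c$i + L) \<and> 0 \<le> t \<and> t \<le> T \<longrightarrow>
                 sigma_proc \<sigma> (P \<omega>) x t = sigma_trunc (R \<omega>) \<sigma> (P \<omega>) x t))"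
proof -
  interpret prob_space M using assms(2) by (rule poisson_pp_prob_space)
  define a where "a = real CARD('d) / (real CARD('d) + 1)"
  define b where "b = (\<chi> i. c $ i + L)"
  obtain C A where "0 \<le> C" and A: "\<And>n. A n \<in> sets M" "summable (\<lambda>n. measure M (A n))"
    and chains: "\<And>\<omega> n. \<omega> \<in> space M \<Longrightarrow> 0 < n \<Longrightarrow> \<omega> \<notin> A n \<Longrightarrow>
      Hlpp (P \<omega>) (\<chi> i. b $ i - real n) b T \<le> ereal (C * real n powr a + 1)"
    using sublinear_chains_outside_events[OF assms(2,5), of b, folded a_def] by blast
  obtain N where N: "N \<in> measurable M (count_space UNIV)" "AE \<omega> in M. \<forall>n\<ge>N \<omega>. \<omega> \<notin> A n"
    using borel_cantelli_eventually_index[OF A] by blast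
  obtain R0 where "0 \<le> R0" and local: "\<And>Pw N R x t.
      (\<And>n. N \<le> n \<Longrightarrow> Hlpp Pw (\<chi> i. b $ i - real n) b T \<le> ereal (C * real n powr a + 1)) \<Longrightarrow>
      R0 + real N \<le> R \<Longrightarrow> x \<in> cbox c b \<Longrightarrow> t \<le> T \<Longrightarrow> sigma_proc \<sigma> Pw x t = sigma_trunc R \<sigma> Pw x t"
    using StateSpace_localization[OF assms(3) \<open>0 \<le> C\<close>, of b T c, folded a_def] by blast
  define R where "R \<omega> = R0 + real (N \<omega>) + 1" for \<omega>
  have "AE \<omega> in M. 0 < R \<omega> \<and> (\<forall>x t. (\<forall>i. c $ i \<le> x $ i \<and> x $ i \<le> c $ i + L) \<and> 0 \<le> t \<and> t \<le> T \<longrightarrow>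
      sigma_proc \<sigma> (P \<omega>) x t = sigma_trunc (R \<omega>) \<sigma> (P \<omega>) x t)"
    using N(2) AE_space
  proof eventually_elim
    case (elim \<omega>)
    then have "\<And>n. Suc (N \<omega>) \<le> n \<Longrightarrow>
        Hlpp (P \<omega>) (\<chi> i. b $ i - real n) b T \<le> ereal (C * real n powr a + 1)"
      by (intro chains) auto
    from local[OF this] show ?case using \<open>0 \<le> R0\<close> by (simp add: R_def b_def mem_box_cart)
  qed
  moreover have "R \<in> borel_measurable M" unfolding R_def using N(1) by measurable
  ultimately show ?thesis by blast
qed

end
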